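(* Let $v\in C(S^1,(0,\infty))$ be separable in $S^1$ with $\max_{S^1}v>\min_{S^1}v$. Let $\alpha_0\in[0,2\pi)$ be such that the set of maximum points of $v$ equals $\{(\cos(\alpha_0+\theta),\sin(\alpha_0+\theta)):|\theta|\le\theta_1\}$ for some $\theta_1\in[0,\pi)$ (such $\alpha_0$ exists, and is the angle of the center of the arc of maximum points). Then for every $\alpha\in\mathbb{R}$: if $(\cos\alpha_0,\sin\alpha_0)\in S^1_\alpha$, then $v(x)\ge v(l_\alpha(x))$ for all $x\in S^1_\alpha$; and if $(\cos\alpha_0,\sin\alpha_0)\in S^1\setminus S^1_\alpha$, then $v(x)\le v(l_\alpha(x))$ for all $x\in S^1_\alpha$.
   Context: $S^1\subset\mathbb{R}^2$ is the unit circle. For $\alpha\in\mathbb{R}$, $S^1_\alpha=\{(\cos(\alpha+\theta),\sin(\alpha+\theta)):\theta\in(0,\pi)\}$, and for $x\in S^1$, $l_\alpha(x)$ denotes the reflection of $x$ across the line through the origin with direction $(\cos\alpha,\sin\alpha)$. A function $v\in C(S^1,\mathbb{R})$ is called separable in $S^1$ if for every $\alpha\in[0,2\pi)$, either $v(l_\alpha(x))\ge v(x)$ for all $x\in S^1_\alpha$, or $v(l_\alpha(x))\le v(x)$ for all $x\in S^1_\alpha$. *)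

theory Defs
  imports "HOL-Analysis.Analysis"
begin

definition S1 :: "(real \<times> real) set" where
  "S1 = {(x, y). x\<^sup>2 + y\<^sup>2 = 1}"

definition S1_arc :: "real \<Rightarrow> (real \<times> real) set" where
  "S1_arc \<alpha> = {(cos (\<alpha> + \<theta>), sin (\<alpha> + \<theta>)) | \<theta>. 0 < \<theta> \<and> \<theta> < pi}"

text \<open>Reflection across the line through the origin with direction (cos a, sin a):
  x maps to 2 (x . d) d - x.\<close>
definition refl_line :: "real \<Rightarrow> real \<times> real \<Rightarrow> real \<times> real" where
  "refl_line \<alpha> p = (let s = fst p * cos \<alpha> + snd p * sin \<alpha>
                     in (2 * s * cos \<alpha> - fst p, 2 * s * sin \<alpha> - snd p))"

definition separable_S1 :: "(real \<times> real \<Rightarrow> real) \<Rightarrow> bool" where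
  "separable_S1 v \<longleftrightarrow>
     (\<forall>\<alpha>\<in>{0..<2*pi}. (\<forall>x\<in>S1_arc \<alpha>. v (refl_line \<alpha> x) \<ge> v x)
                     \<or> (\<forall>x\<in>S1_arc \<alpha>. v (refl_line \<alpha> x) \<le> v x))"

end

theory Submission
  imports Defs
begin

text \<open>Let p be the centre of the arc of maximum points. If p lies in the open half circle
  S1_arc \<alpha>, that half circle contains a maximum point whose mirror image is not one (the
  arc has length less than 2\<pi>); separability then forces v \<ge> v \<circ> refl_line \<alpha> on all of
  S1_arc \<alpha>. If p lies in the opposite half circle, the same applies to the angle \<alpha> + \<pi>,
  which describes the same reflection and swaps the two half circles. If p lies on the
  reflection line, rotate the line slightly so that p falls into the opposite half circle
  and pass to the limit using the continuity of v.\<close>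

abbreviation circle_point :: "real \<Rightarrow> real \<times> real" where
  "circle_point t \<equiv> (cos t, sin t)"

definition S1_argmax :: "(real \<times> real \<Rightarrow> real) \<Rightarrow> (real \<times> real) set" where
  "S1_argmax v = {x\<in>S1. \<forall>y\<in>S1. v y \<le> v x}"

lemma circle_point_in_S1: "circle_point t \<in> S1"
  unfolding S1_def by simp

lemma circle_point_eq_iff: "circle_point a = circle_point b \<longleftrightarrow> (\<exists>k::int. a = b + 2 * pi * k)"
  using sin_cos_eq_iff by auto

lemma circle_point_periodic: "circle_point (t + 2 * pi * of_int k) = circle_point t"
  using circle_point_eq_iff by blast

lemma circle_point_neq:
  assumes "0 < b - a" "b - a < 2 * pi"
  shows "circle_point a \<noteq> circle_point b"
proof
  assume "circle_point a = circle_point b"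
  then obtain k :: int where "a = b + 2 * pi * k"
    using circle_point_eq_iff by blast
  with assms have "2 * pi * of_int k < 2 * pi * 0" "2 * pi * (-1) < 2 * pi * of_int k"
    by simp_all
  then have "of_int k < (0::real)" "-1 < (of_int k :: real)"
    by (metis mult_less_cancel_left_pos pi_gt_zero zero_less_mult_iff zero_less_numeral)+
  then show False by simp
qed

lemma refl_line_circle_point: "refl_line a (circle_point t) = circle_point (2 * a - t)"
proof -
  have c: "cos (2 * a - t) = (2 * (cos a)\<^sup>2 - 1) * cos t + 2 * sin a * cos a * sin t"
    by (simp add: cos_diff cos_double_cos sin_double)
  have s: "sin (2 * a - t) = 2 * sin a * cos a * cos t - (2 * (cos a)\<^sup>2 - 1) * sin t"
    by (simp add: sin_diff cos_double_cos sin_double)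
  have "cos a * cos a + sin a * sin a = 1" by (rule sin_cos_squared_add3)
  then show ?thesis
    unfolding refl_line_def Let_def c s prod.inject fst_conv snd_conv power2_eq_square
    by algebra
qed

lemma refl_line_add_pi: "refl_line (a + pi) = refl_line a"
  unfolding refl_line_def by (auto simp: fun_eq_iff Let_def algebra_simps)

lemma refl_line_periodic: "refl_line (a + 2 * pi * of_int k) = refl_line a"
  using circle_point_periodic[of a k] unfolding refl_line_def by (simp add: fun_eq_iff Let_def)

lemma S1_arc_periodic: "S1_arc (a + 2 * pi * of_int k) = S1_arc a"
proof -
  have "circle_point (a + 2 * pi * of_int k + t) = circle_point (a + t)" for t
    using circle_point_periodic[of "a + t" k] by (simp add: algebra_simps)
  then show ?thesis unfolding S1_arc_def by simp
qed

lemma circle_point_in_S1_arc: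
  assumes "0 < \<theta>" "\<theta> < pi" "a = b + \<theta> + 2 * pi * of_int k"
  shows "circle_point a \<in> S1_arc b"
  unfolding S1_arc_def assms(3) circle_point_periodic using assms(1,2) by auto

lemma circle_point_S1_arc_cases:
  obtains "circle_point a \<in> S1_arc \<alpha>" | "circle_point a \<in> S1_arc (\<alpha> + pi)"
    | "circle_point a = circle_point \<alpha>" | "circle_point a = circle_point (\<alpha> + pi)"
proof -
  define k where "k = \<lfloor>(a - \<alpha>) / (2 * pi)\<rfloor>"
  define r where "r = a - \<alpha> - 2 * pi * of_int k"
  have "k \<le> (a - \<alpha>) / (2 * pi)" "(a - \<alpha>) / (2 * pi) < k + 1"
    unfolding k_def by linarith+
  then have r: "0 \<le> r" "r < 2 * pi"
    unfolding r_def by (auto simp: field_simps)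
  have a: "a = \<alpha> + r + 2 * pi * of_int k"
    unfolding r_def by simp
  consider "0 < r \<and> r < pi" | "pi < r" | "r = 0" | "r = pi"
    using r by force
  then show thesis
  proof cases
    case 1
    then show ?thesis using that(1) circle_point_in_S1_arc[OF _ _ a] by blast
  next
    case 2
    have "circle_point a \<in> S1_arc (\<alpha> + pi)"
      by (rule circle_point_in_S1_arc[of "r - pi" _ _ k]) (use 2 r a in auto)
    then show ?thesis by (rule that(2))
  qed (use that(3,4) a circle_point_periodic in auto)
qed

lemma separable_S1_any_angle:
  assumes "separable_S1 v"
  shows "(\<forall>x\<in>S1_arc \<alpha>. v (refl_line \<alpha> x) \<ge> v x) \<or> (\<forall>x\<in>S1_arc \<alpha>. v (refl_line \<alpha> x) \<le> v x)"
proof -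
  define k where "k = \<lfloor>\<alpha> / (2 * pi)\<rfloor>"
  define a where "a = \<alpha> - 2 * pi * of_int k"
  have "k \<le> \<alpha> / (2 * pi)" "\<alpha> / (2 * pi) < k + 1"
    unfolding k_def by linarith+
  then have "a \<in> {0..<2 * pi}"
    unfolding a_def by (auto simp: field_simps)
  moreover have "\<alpha> = a + 2 * pi * of_int k"
    unfolding a_def by simp
  ultimately show ?thesis
    using assms unfolding separable_S1_def by (metis S1_arc_periodic refl_line_periodic)
qed

text \<open>The angle s of a maximum point in S1_arc \<alpha>, measured from \<alpha>, whose mirror image at
  angle -s is not a maximum point; \<theta> is the angle of the centre of the maximum arc.\<close>
lemma witness_angle_exists:
  fixes \<theta> \<theta>1 :: real
  assumes "0 < \<theta>" "\<theta> < pi" "0 \<le> \<theta>1" "\<theta>1 < pi"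
  obtains s where "0 < s" "s < pi" "\<bar>s - \<theta>\<bar> \<le> \<theta>1" "\<theta>1 < s + \<theta>" "s + \<theta> < 2 * pi - \<theta>1"
proof -
  consider "\<theta> + \<theta>1 < pi" | "pi \<le> \<theta> + \<theta>1" "\<theta>1 \<le> \<theta>" | "pi \<le> \<theta> + \<theta>1" "\<theta> < \<theta>1"
    by linarith
  then show thesis
  proof cases
    case 1
    then show ?thesis using that[of "\<theta> + \<theta>1"] assms by auto
  next
    case 2
    then show ?thesis using that[of "pi - \<theta>1"] assms by auto
  next
    case 3
    then show ?thesis using that[of "pi - \<theta>"] assms by auto
  qed
qed

lemma separable_ge_if_center_in_S1_arc:
  assumes sep: "separable_S1 v"
    and \<theta>1: "\<theta>1 \<in> {0..<pi}"
    and maxset: "S1_argmax v = {circle_point (\<alpha>0 + \<theta>) | \<theta>. \<bar>\<theta>\<bar> \<le> \<theta>1}"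
    and center: "circle_point \<alpha>0 \<in> S1_arc \<alpha>"
  shows "\<forall>x\<in>S1_arc \<alpha>. v x \<ge> v (refl_line \<alpha> x)"
proof -
  obtain \<theta> where \<theta>: "0 < \<theta>" "\<theta> < pi" "circle_point \<alpha>0 = circle_point (\<alpha> + \<theta>)"
    using center unfolding S1_arc_def by auto
  then obtain k :: int where "\<alpha>0 = \<alpha> + \<theta> + 2 * pi * k"
    using circle_point_eq_iff by blast
  then have "circle_point (\<alpha>0 + \<phi>) = circle_point (\<alpha> + \<theta> + \<phi>)" for \<phi>
    using circle_point_periodic[of "\<alpha> + \<theta> + \<phi>" k] by (simp add: algebra_simps)
  then have M: "S1_argmax v = {circle_point (\<alpha> + \<theta> + \<phi>) | \<phi>. \<bar>\<phi>\<bar> \<le> \<theta>1}"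
    unfolding maxset by simp
  obtain s where s: "0 < s" "s < pi" "\<bar>s - \<theta>\<bar> \<le> \<theta>1" "\<theta>1 < s + \<theta>" "s + \<theta> < 2 * pi - \<theta>1"
    using witness_angle_exists \<theta>(1,2) \<theta>1 by auto
  define y where "y = circle_point (\<alpha> + s)"
  have y_arc: "y \<in> S1_arc \<alpha>"
    unfolding y_def S1_arc_def using s by auto
  have y_max: "y \<in> S1_argmax v"
    unfolding M y_def using s(3) by (auto intro!: exI[of _ "s - \<theta>"])
  have refl_y: "refl_line \<alpha> y = circle_point (\<alpha> - s)"
    unfolding y_def refl_line_circle_point by (simp add: algebra_simps)
  have "refl_line \<alpha> y \<notin> S1_argmax v"
  proof
    assume "refl_line \<alpha> y \<in> S1_argmax v"
    then obtain \<phi> where "\<bar>\<phi>\<bar> \<le> \<theta>1" "circle_point (\<alpha> - s) = circle_point (\<alpha> + \<theta> + \<phi>)"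
      unfolding M refl_y by auto
    moreover have "0 < (\<alpha> + \<theta> + \<phi>) - (\<alpha> - s)" "(\<alpha> + \<theta> + \<phi>) - (\<alpha> - s) < 2 * pi"
      using s \<open>\<bar>\<phi>\<bar> \<le> \<theta>1\<close> by auto
    ultimately show False using circle_point_neq by blast
  qed
  then have "v (refl_line \<alpha> y) < v y"
    using y_max refl_y circle_point_in_S1[of "\<alpha> - s"] unfolding S1_argmax_def by force
  then show ?thesis
    using separable_S1_any_angle[OF sep, of \<alpha>] y_arc by force
qed

lemma separable_le_if_center_in_opposite_S1_arc:
  assumes sep: "separable_S1 v"
    and \<theta>1: "\<theta>1 \<in> {0..<pi}"
    and maxset: "S1_argmax v = {circle_point (\<alpha>0 + \<theta>) | \<theta>. \<bar>\<theta>\<bar> \<le> \<theta>1}"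
    and center: "circle_point \<alpha>0 \<in> S1_arc (\<alpha> + pi)"
  shows "\<forall>x\<in>S1_arc \<alpha>. v x \<le> v (refl_line \<alpha> x)"
proof
  fix x assume "x \<in> S1_arc \<alpha>"
  then obtain t where t: "0 < t" "t < pi" "x = circle_point (\<alpha> + t)"
    unfolding S1_arc_def by auto
  have refl_x: "refl_line \<alpha> x = circle_point (\<alpha> - t)"
    unfolding t refl_line_circle_point by (simp add: algebra_simps)
  have "refl_line \<alpha> x \<in> S1_arc (\<alpha> + pi)"
    unfolding refl_x using t by (intro circle_point_in_S1_arc[of "pi - t" _ _ "-1"]) auto
  moreover have "refl_line (\<alpha> + pi) (refl_line \<alpha> x) = x"
    unfolding refl_line_add_pi t refl_line_circle_point by (simp add: algebra_simps)
  ultimately show "v x \<le> v (refl_line \<alpha> x)"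
    using separable_ge_if_center_in_S1_arc[OF sep \<theta>1 maxset center] by metis
qed

lemma separable_le_if_center_on_line:
  assumes cont: "continuous_on S1 v"
    and sep: "separable_S1 v"
    and \<theta>1: "\<theta>1 \<in> {0..<pi}"
    and maxset: "S1_argmax v = {circle_point (\<alpha>0 + \<theta>) | \<theta>. \<bar>\<theta>\<bar> \<le> \<theta>1}"
    and center: "circle_point \<alpha>0 = circle_point \<alpha> \<or> circle_point \<alpha>0 = circle_point (\<alpha> + pi)"
  shows "\<forall>x\<in>S1_arc \<alpha>. v x \<le> v (refl_line \<alpha> x)"
proof
  fix x assume "x \<in> S1_arc \<alpha>"
  then obtain t where t: "0 < t" "t < pi" "x = circle_point (\<alpha> + t)"
    unfolding S1_arc_def by auto
  \<comment> \<open>Rotating the line by \<sigma> h with small h > 0 moves the centre into the opposite half.\<close>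
  obtain \<sigma> :: real where \<sigma>: "\<sigma> = 1 \<or> \<sigma> = -1"
    and rotated: "\<And>h. 0 < h \<Longrightarrow> h < pi \<Longrightarrow> circle_point \<alpha>0 \<in> S1_arc (\<alpha> + \<sigma> * h + pi)"
  proof (cases "circle_point \<alpha>0 = circle_point \<alpha>")
    case True
    have "circle_point \<alpha>0 \<in> S1_arc (\<alpha> + h + pi)" if "0 < h" "h < pi" for h
      unfolding True by (rule circle_point_in_S1_arc[of "pi - h" _ _ "-1"]) (use that in auto)
    then show ?thesis using that[of 1] by simp
  next
    case False
    then have "circle_point \<alpha>0 = circle_point (\<alpha> + pi)" using center by blast
    then have "circle_point \<alpha>0 \<in> S1_arc (\<alpha> - h + pi)" if "0 < h" "h < pi" for h
      by (simp only:) (rule circle_point_in_S1_arc[of h _ _ 0]; use that in simp)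
    then show ?thesis using that[of "-1"] by simp
  qed
  define g where "g h = v (refl_line (\<alpha> + \<sigma> * h) x)" for h
  have g: "g h = v (circle_point (\<alpha> - t + 2 * \<sigma> * h))" for h
    unfolding g_def t refl_line_circle_point by (simp add: algebra_simps)
  have "continuous_on UNIV g"
    unfolding g by (rule continuous_on_compose2[OF cont])
      (auto intro!: continuous_intros simp: circle_point_in_S1)
  then have "isCont g 0"
    by (simp add: continuous_on_eq_continuous_at)
  then have "(g \<longlongrightarrow> g 0) (at_right 0)"
    unfolding isCont_def by (rule tendsto_mono[OF at_le[OF subset_UNIV]])
  moreover have "\<forall>\<^sub>F h in at_right 0. v x \<le> g h"
  proof (rule eventually_mono[OF eventually_at_right_real[of 0 "min t (pi - t)"]])
    fix h assume h: "h \<in> {0<..<min t (pi - t)}"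
    have "x \<in> S1_arc (\<alpha> + \<sigma> * h)"
      unfolding t using h \<sigma> by (intro circle_point_in_S1_arc[of "t - \<sigma> * h" _ _ 0]) auto
    then show "v x \<le> g h"
      unfolding g_def using h separable_le_if_center_in_opposite_S1_arc[OF sep \<theta>1 maxset rotated] by auto
  qed (use t in auto)
  ultimately have "v x \<le> g 0"
    by (rule tendsto_lowerbound) simp
  then show "v x \<le> v (refl_line \<alpha> x)"
    unfolding g_def by simp
qed

theorem corollary2p1:
  fixes v :: "real \<times> real \<Rightarrow> real" and \<alpha>0 \<theta>1 :: real
  assumes cont: "continuous_on S1 v"
    and pos: "\<forall>x\<in>S1. v x > 0"
    and sep: "separable_S1 v"
    and nonconst: "(SUP x\<in>S1. v x) > (INF x\<in>S1. v x)"
    and \<alpha>0: "\<alpha>0 \<in> {0..<2*pi}"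
    and \<theta>1: "\<theta>1 \<in> {0..<pi}"
    and maxset: "{x\<in>S1. \<forall>y\<in>S1. v y \<le> v x}
                 = {(cos (\<alpha>0 + \<theta>), sin (\<alpha>0 + \<theta>)) | \<theta>. \<bar>\<theta>\<bar> \<le> \<theta>1}"
  shows "\<forall>\<alpha>::real.
           ((cos \<alpha>0, sin \<alpha>0) \<in> S1_arc \<alpha> \<longrightarrow> (\<forall>x\<in>S1_arc \<alpha>. v x \<ge> v (refl_line \<alpha> x)))
         \<and> ((cos \<alpha>0, sin \<alpha>0) \<in> S1 - S1_arc \<alpha> \<longrightarrow> (\<forall>x\<in>S1_arc \<alpha>. v x \<le> v (refl_line \<alpha> x)))"
proof (intro allI conjI impI)
  fix \<alpha> :: real
  note M = maxset[folded S1_argmax_def]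
  show "circle_point \<alpha>0 \<in> S1_arc \<alpha> \<Longrightarrow> \<forall>x\<in>S1_arc \<alpha>. v x \<ge> v (refl_line \<alpha> x)"
    using separable_ge_if_center_in_S1_arc[OF sep \<theta>1 M] .
  assume "circle_point \<alpha>0 \<in> S1 - S1_arc \<alpha>"
  then consider "circle_point \<alpha>0 \<in> S1_arc (\<alpha> + pi)"
    | "circle_point \<alpha>0 = circle_point \<alpha> \<or> circle_point \<alpha>0 = circle_point (\<alpha> + pi)"
    by (metis DiffD2 circle_point_S1_arc_cases)
  then show "\<forall>x\<in>S1_arc \<alpha>. v x \<le> v (refl_line \<alpha> x)"
  proof cases
    case 1
    then show ?thesis by (rule separable_le_if_center_in_opposite_S1_arc[OF sep \<theta>1 M])
  next
    case 2
    then show ?thesis by (rule separable_le_if_center_on_line[OF cont sep \<theta>1 M])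
  qed
qed

end
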